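(* In a PL+C model, if $\sum_{i\in\mathcal U}p_i\ge\alpha k$ for some $\alpha>1$, then $$\sum_{C\subseteq\mathcal U,\ |C|=k}\Pr_C(C)\le\frac{(\alpha e^{1-\alpha})^k}{1-(\alpha e^{1-\alpha})^k}.$$
   Context: Universe $\mathcal U=\{1,\dots,n\}$, integer $k\le n$, consideration probabilities $p_i\in(0,1]$. $\Pr_C(C)$ is the probability of consideration set $C$ when each item is included independently with probability $p_i$, conditioned on $|C|\ge k$: $\Pr_C(C)=\frac{1}{z_{k,p}}\prod_{h\in C}p_h\prod_{h\notin C}(1-p_h)$ for $|C|\ge k$, where $z_{k,p}=\sum_{|C|\ge k}\prod_{h\in C}p_h\prod_{h\notin C}(1-p_h)$, and $\Pr_C(C)=0$ if $|C|<k$. *)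

theory Defs
  imports Complex_Main
begin

text \<open>Universe U = {1..n}. Unnormalised weight of a consideration set C under
independent inclusion with probabilities p.\<close>
definition cs_weight :: "nat \<Rightarrow> (nat \<Rightarrow> real) \<Rightarrow> nat set \<Rightarrow> real" where
  "cs_weight n p C = (\<Prod>h\<in>C. p h) * (\<Prod>h\<in>{1..n} - C. 1 - p h)"

definition z_kp :: "nat \<Rightarrow> nat \<Rightarrow> (nat \<Rightarrow> real) \<Rightarrow> real" where
  "z_kp n k p = (\<Sum>C | C \<subseteq> {1..n} \<and> card C \<ge> k. cs_weight n p C)"

definition PrC :: "nat \<Rightarrow> nat \<Rightarrow> (nat \<Rightarrow> real) \<Rightarrow> nat set \<Rightarrow> real" where
  "PrC n k p C = (if C \<subseteq> {1..n} \<and> card C \<ge> k then cs_weight n p C / z_kp n k p else 0)"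

end

theory Submission
  imports Defs
begin

text \<open>Chernoff argument. The weights cs_weight are the law of a random subset C of U that
contains each i independently with probability p i, whose generating function is
\<open>E x^|C| = \<Prod>(1 - p i (1 - x)) \<le> exp (-(1 - x) \<Sum> p)\<close>. Markov's inequality with x = 1/\<alpha> bounds
the lower tail \<open>P(|C| \<le> k)\<close> by \<open>\<beta> = (\<alpha> e^(1-\<alpha>))^k < 1\<close>. Writing A = P(|C| = k) and B = P(|C| < k),
the left-hand side is A / (1 - B), and A + B \<le> \<beta> gives A / (1 - B) \<le> \<beta> \<le> \<beta> / (1 - \<beta>).\<close>

lemma cs_weight_nonneg:
  assumes "\<forall>i\<in>{1..n}. 0 \<le> p i \<and> p i \<le> 1" and "C \<subseteq> {1..n}"
  shows "0 \<le> cs_weight n p C"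
  unfolding cs_weight_def using assms
  by (intro mult_nonneg_nonneg prod_nonneg) auto

lemma sum_cs_weight_power_card:
  "(\<Sum>C\<in>Pow {1..n}. cs_weight n p C * x ^ card C) = (\<Prod>i=1..n. p i * x + (1 - p i))"
proof -
  have "(\<Prod>i=1..n. p i * x + (1 - p i))
      = (\<Sum>C\<in>Pow {1..n}. (\<Prod>i\<in>C. p i * x) * (\<Prod>i\<in>{1..n} - C. 1 - p i))"
    by (rule prod_add) simp
  also have "\<dots> = (\<Sum>C\<in>Pow {1..n}. cs_weight n p C * x ^ card C)"
    unfolding cs_weight_def by (intro sum.cong refl) (simp add: prod.distrib)
  finally show ?thesis by simp
qed

lemma sum_cs_weight: "(\<Sum>C\<in>Pow {1..n}. cs_weight n p C) = 1"
  using sum_cs_weight_power_card[of n p 1] by simp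

lemma prod_generating_le_exp:
  fixes p :: "nat \<Rightarrow> real"
  assumes "\<forall>i\<in>{1..n}. 0 \<le> p i \<and> p i \<le> 1" and "0 \<le> x" "x \<le> 1"
  shows "(\<Prod>i=1..n. p i * x + (1 - p i)) \<le> exp (- (1 - x) * (\<Sum>i=1..n. p i))"
proof -
  have "(\<Prod>i=1..n. p i * x + (1 - p i)) \<le> (\<Prod>i=1..n. exp (- (1 - x) * p i))"
  proof (rule prod_mono)
    fix i assume "i \<in> {1..n}"
    with assms have "0 \<le> p i * x + (1 - p i)"
      by (simp add: add_nonneg_nonneg)
    moreover have "p i * x + (1 - p i) \<le> exp (- (1 - x) * p i)"
      using exp_ge_add_one_self[of "- (1 - x) * p i"] by (simp add: algebra_simps)
    ultimately show "0 \<le> p i * x + (1 - p i) \<and> p i * x + (1 - p i) \<le> exp (- (1 - x) * p i)"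
      by simp
  qed
  also have "\<dots> = exp (- (1 - x) * (\<Sum>i=1..n. p i))"
    by (simp add: exp_sum[symmetric] sum_distrib_left)
  finally show ?thesis .
qed

lemma sum_cs_weight_card_le_chernoff:
  assumes p: "\<forall>i\<in>{1..n}. 0 \<le> p i \<and> p i \<le> 1" and x: "0 < x" "x \<le> 1"
  shows "(\<Sum>C | C \<subseteq> {1..n} \<and> card C \<le> k. cs_weight n p C)
           \<le> exp (- (1 - x) * (\<Sum>i=1..n. p i)) / x ^ k"
proof -
  have markov: "cs_weight n p C \<le> cs_weight n p C * x ^ card C / x ^ k"
    if "card C \<le> k" "C \<subseteq> {1..n}" for C
  proof -
    have "x ^ k \<le> x ^ card C"
      using that x by (simp add: power_decreasing)
    then show ?thesis
      using cs_weight_nonneg[OF p that(2)] x by (simp add: le_divide_eq mult_left_mono)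
  qed
  have "(\<Sum>C | C \<subseteq> {1..n} \<and> card C \<le> k. cs_weight n p C)
      \<le> (\<Sum>C | C \<subseteq> {1..n} \<and> card C \<le> k. cs_weight n p C * x ^ card C / x ^ k)"
    by (intro sum_mono markov) auto
  also have "\<dots> \<le> (\<Sum>C\<in>Pow {1..n}. cs_weight n p C * x ^ card C / x ^ k)"
    using cs_weight_nonneg[OF p] x by (intro sum_mono2) auto
  also have "\<dots> = (\<Prod>i=1..n. p i * x + (1 - p i)) / x ^ k"
    unfolding sum_divide_distrib[symmetric] sum_cs_weight_power_card ..
  also have "\<dots> \<le> exp (- (1 - x) * (\<Sum>i=1..n. p i)) / x ^ k"
    using prod_generating_le_exp[OF p] x by (intro divide_right_mono) auto
  finally show ?thesis .
qed

lemma sum_cs_weight_card_le: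
  assumes p: "\<forall>i\<in>{1..n}. 0 \<le> p i \<and> p i \<le> 1" and "\<alpha> > 1"
    and mean: "(\<Sum>i=1..n. p i) \<ge> \<alpha> * real k"
  shows "(\<Sum>C | C \<subseteq> {1..n} \<and> card C \<le> k. cs_weight n p C) \<le> (\<alpha> * exp (1 - \<alpha>)) ^ k"
proof -
  have "(\<Sum>C | C \<subseteq> {1..n} \<and> card C \<le> k. cs_weight n p C)
      \<le> exp (- (1 - 1 / \<alpha>) * (\<Sum>i=1..n. p i)) / (1 / \<alpha>) ^ k"
    using \<open>\<alpha> > 1\<close> by (intro sum_cs_weight_card_le_chernoff[OF p]) auto
  also have "\<dots> \<le> exp (- (1 - 1 / \<alpha>) * (\<alpha> * real k)) * \<alpha> ^ k"
    using mean \<open>\<alpha> > 1\<close> by (simp add: power_one_over)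
  also have "\<dots> = (\<alpha> * exp (1 - \<alpha>)) ^ k"
    using \<open>\<alpha> > 1\<close>
    by (simp add: power_mult_distrib exp_of_nat_mult[symmetric] field_simps)
  finally show ?thesis .
qed

lemma z_kp_eq_one_minus:
  "z_kp n k p = 1 - (\<Sum>C | C \<subseteq> {1..n} \<and> card C < k. cs_weight n p C)"
proof -
  have split: "Pow {1..n} = {C. C \<subseteq> {1..n} \<and> k \<le> card C} \<union> {C. C \<subseteq> {1..n} \<and> card C < k}"
    by auto
  have "(\<Sum>C\<in>Pow {1..n}. cs_weight n p C)
      = z_kp n k p + (\<Sum>C | C \<subseteq> {1..n} \<and> card C < k. cs_weight n p C)"
    unfolding split z_kp_def by (rule sum.union_disjoint) auto
  then show ?thesis
    using sum_cs_weight[of n p] by simp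
qed

lemma sum_PrC_card_eq:
  "(\<Sum>C | C \<subseteq> {1..n} \<and> card C = k. PrC n k p C)
     = (\<Sum>C | C \<subseteq> {1..n} \<and> card C = k. cs_weight n p C)
       / (1 - (\<Sum>C | C \<subseteq> {1..n} \<and> card C < k. cs_weight n p C))"
proof -
  have "(\<Sum>C | C \<subseteq> {1..n} \<and> card C = k. PrC n k p C)
      = (\<Sum>C | C \<subseteq> {1..n} \<and> card C = k. cs_weight n p C / z_kp n k p)"
    by (intro sum.cong) (auto simp: PrC_def)
  then show ?thesis
    unfolding sum_divide_distrib[symmetric] z_kp_eq_one_minus .
qed

lemma alpha_exp_one_minus_bounds:
  fixes \<alpha> :: real
  assumes "\<alpha> > 1"
  shows "0 < \<alpha> * exp (1 - \<alpha>)" "\<alpha> * exp (1 - \<alpha>) < 1"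
proof -
  have "ln \<alpha> < \<alpha> - 1"
    using ln_add_one_self_less_self[of "\<alpha> - 1"] assms by simp
  then have "exp (ln \<alpha>) < exp (\<alpha> - 1)"
    by simp
  then have "\<alpha> < exp (\<alpha> - 1)"
    using assms by simp
  then have "\<alpha> * exp (1 - \<alpha>) < exp (\<alpha> - 1) * exp (1 - \<alpha>)"
    by simp
  also have "\<dots> = 1"
    by (simp add: exp_add[symmetric])
  finally show "\<alpha> * exp (1 - \<alpha>) < 1" .
  show "0 < \<alpha> * exp (1 - \<alpha>)"
    using assms by simp
qed

lemma divide_one_minus_le:
  fixes a b \<beta> :: real
  assumes "0 \<le> a" "0 \<le> b" "a + b \<le> \<beta>" "\<beta> < 1"
  shows "a / (1 - b) \<le> \<beta>"
proof -
  have "a \<le> \<beta> * (1 - b)"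
    using assms mult_left_mono[of \<beta> 1 b] by (simp add: algebra_simps)
  then show ?thesis
    using assms by (simp add: divide_le_eq)
qed

theorem lemma4:
  fixes n k :: nat and p :: "nat \<Rightarrow> real" and \<alpha> :: real
  assumes "1 \<le> k" and "k \<le> n"
    and "\<forall>i\<in>{1..n}. 0 < p i \<and> p i \<le> 1"
    and "\<alpha> > 1"
    and "(\<Sum>i=1..n. p i) \<ge> \<alpha> * real k"
  shows "(\<Sum>C | C \<subseteq> {1..n} \<and> card C = k. PrC n k p C)
           \<le> (\<alpha> * exp (1 - \<alpha>)) ^ k / (1 - (\<alpha> * exp (1 - \<alpha>)) ^ k)"
proof -
  define \<beta> where "\<beta> = (\<alpha> * exp (1 - \<alpha>)) ^ k"
  define A where "A = (\<Sum>C | C \<subseteq> {1..n} \<and> card C = k. cs_weight n p C)"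
  define B where "B = (\<Sum>C | C \<subseteq> {1..n} \<and> card C < k. cs_weight n p C)"
  have p: "\<forall>i\<in>{1..n}. 0 \<le> p i \<and> p i \<le> 1"
    using assms(3) by auto
  have "0 \<le> \<beta>" "\<beta> < 1"
    using alpha_exp_one_minus_bounds[OF assms(4)] assms(1) unfolding \<beta>_def
    by (simp_all add: power_less_one_iff)
  have split: "{C. C \<subseteq> {1..n} \<and> card C \<le> k}
      = {C. C \<subseteq> {1..n} \<and> card C = k} \<union> {C. C \<subseteq> {1..n} \<and> card C < k}"
    by auto
  have "A + B = (\<Sum>C | C \<subseteq> {1..n} \<and> card C \<le> k. cs_weight n p C)"
    unfolding A_def B_def split by (rule sum.union_disjoint[symmetric]) auto
  also have "\<dots> \<le> \<beta>"
    unfolding \<beta>_def using p assms(4,5) by (rule sum_cs_weight_card_le)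
  finally have "A + B \<le> \<beta>" .
  have "0 \<le> A" "0 \<le> B"
    unfolding A_def B_def by (intro sum_nonneg cs_weight_nonneg[OF p]; simp)+
  have "(\<Sum>C | C \<subseteq> {1..n} \<and> card C = k. PrC n k p C) = A / (1 - B)"
    unfolding A_def B_def by (rule sum_PrC_card_eq)
  also have "\<dots> \<le> \<beta>"
    using \<open>0 \<le> A\<close> \<open>0 \<le> B\<close> \<open>A + B \<le> \<beta>\<close> \<open>\<beta> < 1\<close> by (rule divide_one_minus_le)
  also have "\<dots> \<le> \<beta> / (1 - \<beta>)"
    using \<open>0 \<le> \<beta>\<close> \<open>\<beta> < 1\<close> by (simp add: le_divide_eq mult_left_le)
  finally show ?thesis
    unfolding \<beta>_def .
qed

end
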